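(* Let $S\subseteq\mathbb N^d$ be a good semigroup, $E\subsetneq S$ a proper good ideal, and $A=S\setminus E=\bigcup_{i=1}^NA_i$ its partition into levels. Let $\boldsymbol\alpha\in A_i$ with $i<N$. Then for every $k=1,\dots,d$ there exists $\boldsymbol\beta^{(k)}\in A_{i+1}$ with $\boldsymbol\beta^{(k)}\ge\boldsymbol\alpha$ and $\beta^{(k)}_k>\alpha_k$.
   Context: Notation: on $\mathbb{Z}^d$, $\le$ componentwise, $\boldsymbol\alpha\ll\boldsymbol\beta$ means $\alpha_i<\beta_i$ for all $i$, $\boldsymbol\alpha\le\le\boldsymbol\beta$ means $=$ or $\ll$, $\wedge$ componentwise minimum, $I=\{1,\dots,d\}$, $\Delta^S_F(\boldsymbol\alpha)=\{\boldsymbol\beta\in S:\beta_i=\alpha_i\ (i\in F),\ \beta_j>\alpha_j\ (j\notin F)\}$. A good semigroup is a submonoid $S$ of $(\mathbb{N}^d,+)$ closed under $\wedge$ (G1), satisfying (G2): if $\boldsymbol\alpha\neq\boldsymbol\beta\in S$ and $\alpha_i=\beta_i$, there is $\boldsymbol\epsilon\in S$ with $\epsilon_i>\alpha_i$, $\epsilon_j\ge\min\{\alpha_j,\beta_j\}$ for $j\ne i$, with equality if $\alpha_j\ne\beta_j$; and (G3): $\boldsymbol c+\mathbb N^d\subseteq S$ for some $\boldsymbol c$. A good ideal is $E\subseteq S$ with $E+S\subseteq E$ satisfying (G1)–(G3). Levels: $\boldsymbol\alpha\in B$ is a complete infimum of $\boldsymbol\beta^{(1)},\dots,\boldsymbol\beta^{(r)}\in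 B$ ($r\ge2$) if $\boldsymbol\beta^{(j)}\in\Delta^S_{F_j}(\boldsymbol\alpha)$ with $\emptyset\ne F_j\subsetneq I$, $\boldsymbol\beta^{(j)}\wedge\boldsymbol\beta^{(k)}=\boldsymbol\alpha$ ($j\ne k$), $\bigcap F_j=\emptyset$. $B^{(1)}$ = maximal elements of $A$ for $\le\le$, $C^{(1)}$ = those that are complete infima of $r$ elements of $B^{(1)}$ ($1<r\le d$), $D^{(1)}=B^{(1)}\setminus C^{(1)}$; inductively for $A\setminus\bigcup_{j<i}D^{(j)}$; $A=\bigsqcup_{i=1}^ND^{(i)}$, $A_i=D^{(N+1-i)}$. *)

theory Defs
  imports Main
begin

text \<open>Elements of \<open>\<nat>^d\<close> are functions \<open>'i \<Rightarrow> nat\<close> over a finite index type \<open>'i\<close>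
  (so \<open>I = UNIV\<close>, \<open>d = CARD('i)\<close>); \<open>\<le>\<close> is the pointwise order.\<close>

definition vadd :: "('i \<Rightarrow> nat) \<Rightarrow> ('i \<Rightarrow> nat) \<Rightarrow> ('i \<Rightarrow> nat)" where
  "vadd a b = (\<lambda>i. a i + b i)"

definition vmin :: "('i \<Rightarrow> nat) \<Rightarrow> ('i \<Rightarrow> nat) \<Rightarrow> ('i \<Rightarrow> nat)" where
  "vmin a b = (\<lambda>i. min (a i) (b i))"

definition sless :: "('i \<Rightarrow> nat) \<Rightarrow> ('i \<Rightarrow> nat) \<Rightarrow> bool" (infix "\<lless>" 50) where
  "a \<lless> b \<longleftrightarrow> (\<forall>i. a i < b i)"

definition G1 :: "('i \<Rightarrow> nat) set \<Rightarrow> bool" where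
  "G1 X \<longleftrightarrow> (\<forall>a\<in>X. \<forall>b\<in>X. vmin a b \<in> X)"

definition G2 :: "('i \<Rightarrow> nat) set \<Rightarrow> bool" where
  "G2 X \<longleftrightarrow> (\<forall>a\<in>X. \<forall>b\<in>X. \<forall>i. a \<noteq> b \<and> a i = b i \<longrightarrow>
      (\<exists>e\<in>X. e i > a i \<and> (\<forall>j. j \<noteq> i \<longrightarrow>
          e j \<ge> min (a j) (b j) \<and> (a j \<noteq> b j \<longrightarrow> e j = min (a j) (b j)))))"

definition G3 :: "('i \<Rightarrow> nat) set \<Rightarrow> bool" where
  "G3 X \<longleftrightarrow> (\<exists>c. \<forall>v. c \<le> v \<longrightarrow> v \<in> X)"

definition good_semigroup :: "('i \<Rightarrow> nat) set \<Rightarrow> bool" where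
  "good_semigroup S \<longleftrightarrow> (\<lambda>_. 0) \<in> S \<and> (\<forall>a\<in>S. \<forall>b\<in>S. vadd a b \<in> S) \<and> G1 S \<and> G2 S \<and> G3 S"

definition good_ideal :: "('i \<Rightarrow> nat) set \<Rightarrow> ('i \<Rightarrow> nat) set \<Rightarrow> bool" where
  "good_ideal S E \<longleftrightarrow> E \<subseteq> S \<and> (\<forall>e\<in>E. \<forall>s\<in>S. vadd e s \<in> E) \<and> G1 E \<and> G2 E \<and> G3 E"

definition Delta :: "('i \<Rightarrow> nat) set \<Rightarrow> 'i set \<Rightarrow> ('i \<Rightarrow> nat) \<Rightarrow> ('i \<Rightarrow> nat) set" where
  "Delta S F a = {b \<in> S. (\<forall>i\<in>F. b i = a i) \<and> (\<forall>j. j \<notin> F \<longrightarrow> b j > a j)}"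

definition complete_infimum :: "('i::finite \<Rightarrow> nat) set \<Rightarrow> ('i \<Rightarrow> nat) set \<Rightarrow> ('i \<Rightarrow> nat) \<Rightarrow> bool" where
  "complete_infimum S B a \<longleftrightarrow> a \<in> B \<and>
     (\<exists>(r::nat) (bs :: nat \<Rightarrow> ('i \<Rightarrow> nat)) (Fs :: nat \<Rightarrow> 'i set).
        1 < r \<and> r \<le> card (UNIV :: 'i set) \<and>
        (\<forall>j<r. bs j \<in> B \<and> Fs j \<noteq> {} \<and> Fs j \<subset> UNIV \<and> bs j \<in> Delta S (Fs j) a) \<and>
        (\<forall>j<r. \<forall>k<r. j \<noteq> k \<longrightarrow> vmin (bs j) (bs k) = a) \<and>
        (\<Inter>j\<in>{..<r}. Fs j) = {})"

definition maxset :: "('i \<Rightarrow> nat) set \<Rightarrow> ('i \<Rightarrow> nat) set" where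
  "maxset R = {a \<in> R. \<forall>b\<in>R. (b = a \<or> a \<lless> b) \<longrightarrow> b = a}"

definition Dset :: "('i::finite \<Rightarrow> nat) set \<Rightarrow> ('i \<Rightarrow> nat) set \<Rightarrow> ('i \<Rightarrow> nat) set" where
  "Dset S R = {a \<in> maxset R. \<not> complete_infimum S (maxset R) a}"

text \<open>\<open>rem S A n = A \<setminus> (D^{(1)} \<union> \<dots> \<union> D^{(n)})\<close>\<close>
primrec rem :: "('i::finite \<Rightarrow> nat) set \<Rightarrow> ('i \<Rightarrow> nat) set \<Rightarrow> nat \<Rightarrow> ('i \<Rightarrow> nat) set" where
  "rem S A 0 = A"
| "rem S A (Suc n) = rem S A n - Dset S (rem S A n)"

definition Dlevel :: "('i::finite \<Rightarrow> nat) set \<Rightarrow> ('i \<Rightarrow> nat) set \<Rightarrow> nat \<Rightarrow> ('i \<Rightarrow> nat) set" where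
  "Dlevel S A i = Dset S (rem S A (i - 1))"

text \<open>Number \<open>N\<close> of levels: \<open>A = D^{(1)} \<union> \<dots> \<union> D^{(N)}\<close>.\<close>
definition nlevels :: "('i::finite \<Rightarrow> nat) set \<Rightarrow> ('i \<Rightarrow> nat) set \<Rightarrow> nat" where
  "nlevels S A = (LEAST n. rem S A n = {})"

definition level :: "('i::finite \<Rightarrow> nat) set \<Rightarrow> ('i \<Rightarrow> nat) set \<Rightarrow> nat \<Rightarrow> ('i \<Rightarrow> nat) set" where
  "level S A i = Dlevel S A (nlevels S A + 1 - i)"

end

theory Submission
  imports Defs
begin

text \<open>Let \<open>R\<close> be what remains of \<open>A = S - E\<close> after removing the levels above \<open>A\<^sub>i\<^sub>+\<^sub>1\<close>, so that
  \<open>A\<^sub>i\<^sub>+\<^sub>1 = D(R)\<close> and \<open>\<alpha> \<in> R - D(R)\<close>. Since \<open>E\<close> contains some \<open>c + \<nat>\<^sup>d\<close>, no element of \<open>R\<close>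
  dominates \<open>c\<close>; hence \<open>\<lless>\<close>-chains in \<open>R\<close> are finite and \<open>\<alpha>\<close> lies \<open>\<le>\<le>\<close>-below a maximal element
  \<open>\<gamma>\<close> with \<open>\<gamma>\<^sub>k > \<alpha>\<^sub>k\<close> (if \<open>\<alpha>\<close> itself is maximal, it is a complete infimum and one of its
  \<open>\<beta>\<^sup>(\<^sup>j\<^sup>)\<close> serves). Finally, above every maximal \<open>\<gamma>\<close> lies an element of \<open>D(R)\<close>: otherwise every
  maximal element above \<open>\<gamma>\<close> is a complete infimum, and climbing once in each of the \<open>d\<close>
  coordinates yields a maximal element \<open>\<ggreater> \<gamma>\<close>.\<close>

lemma complete_infimum_exceeds:
  assumes "complete_infimum S B a"
  shows "\<exists>z\<in>B. a \<le> z \<and> a l < z l"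
proof -
  obtain r :: nat and bs Fs where
    bs: "\<forall>j<r. bs j \<in> B \<and> Fs j \<noteq> {} \<and> Fs j \<subset> UNIV \<and> bs j \<in> Delta S (Fs j) a"
    and Fs: "(\<Inter>j\<in>{..<r}. Fs j) = {}"
    using assms unfolding complete_infimum_def by (elim conjE exE) (rule that)
  from Fs obtain j where j: "j < r" "l \<notin> Fs j" by blast
  have "bs j \<in> Delta S (Fs j) a" using bs j by blast
  then have eq: "\<forall>i\<in>Fs j. bs j i = a i" and gt: "\<forall>i. i \<notin> Fs j \<longrightarrow> a i < bs j i"
    unfolding Delta_def by auto
  have "a \<le> bs j"
    unfolding le_fun_def using eq gt by (metis less_imp_le order_refl)
  with bs gt j show ?thesis by blast
qed

lemma complete_infima_exceed_on_finite:
  assumes above_ci: "\<And>z. z \<in> B \<Longrightarrow> y \<le> z \<Longrightarrow> complete_infimum S B z"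
    and "y \<in> B" and "finite F"
  shows "\<exists>z\<in>B. y \<le> z \<and> (\<forall>l\<in>F. y l < z l)"
  using \<open>finite F\<close>
proof (induction F rule: finite_induct)
  case empty
  then show ?case using \<open>y \<in> B\<close> by auto
next
  case (insert l F)
  then obtain z where z: "z \<in> B" "y \<le> z" "\<forall>l\<in>F. y l < z l" by blast
  then obtain z' where z': "z' \<in> B" "z \<le> z'" "z l < z' l"
    using above_ci complete_infimum_exceeds by blast
  have "y \<le> z'" using z(2) z'(2) by (rule order.trans)
  moreover have "\<forall>l'\<in>insert l F. y l' < z' l'"
    using z(2,3) z'(2,3) unfolding le_fun_def by (auto intro: le_less_trans less_le_trans)
  ultimately show ?case using z'(1) by blast
qed

lemma Dset_above_maxset:
  assumes "y \<in> maxset R"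
  shows "\<exists>z\<in>Dset S R. y \<le> z"
proof (rule ccontr)
  assume "\<not> ?thesis"
  then have "\<And>z. z \<in> maxset R \<Longrightarrow> y \<le> z \<Longrightarrow> complete_infimum S (maxset R) z"
    unfolding Dset_def by blast
  then obtain z where "z \<in> maxset R" "\<forall>l. y l < z l"
    using complete_infima_exceed_on_finite[OF _ assms finite_UNIV] by blast
  then have "z \<in> R" "y \<lless> z" "z \<noteq> y" unfolding maxset_def sless_def by auto
  with assms show False unfolding maxset_def by blast
qed

definition deficit :: "('i::finite \<Rightarrow> nat) \<Rightarrow> ('i \<Rightarrow> nat) \<Rightarrow> nat" where
  "deficit c x = (\<Sum>j\<in>UNIV. c j - x j)"

lemma deficit_strict_antimono:
  fixes c x y :: "'i::finite \<Rightarrow> nat"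
  assumes "\<not> c \<le> x" and "x \<lless> y"
  shows "deficit c y < deficit c x"
  unfolding deficit_def
proof (rule sum_strict_mono_ex1)
  show "\<forall>j\<in>UNIV. c j - y j \<le> c j - x j"
    using assms(2) unfolding sless_def by (simp add: diff_le_mono2 less_imp_le)
  obtain j where "x j < c j" using assms(1) unfolding le_fun_def by (meson not_le)
  then have "c j - y j < c j - x j" using assms(2) unfolding sless_def by (meson diff_less_mono2)
  then show "\<exists>j\<in>UNIV. c j - y j < c j - x j" by blast
qed simp

lemma maxset_dominates:
  fixes c :: "'i::finite \<Rightarrow> nat"
  assumes bounded: "\<forall>x\<in>R. \<not> c \<le> x" and "x \<in> R"
  shows "x \<in> maxset R \<or> (\<exists>y\<in>maxset R. x \<lless> y)"
  using \<open>x \<in> R\<close>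
proof (induction "deficit c x" arbitrary: x rule: less_induct)
  case less
  show ?case
  proof (cases "x \<in> maxset R")
    case False
    then obtain b where b: "b \<in> R" "x \<lless> b" using less.prems unfolding maxset_def by auto
    have "deficit c b < deficit c x" using deficit_strict_antimono bounded less.prems b by blast
    then have "b \<in> maxset R \<or> (\<exists>y\<in>maxset R. b \<lless> y)" using less.hyps b by blast
    then show ?thesis using b unfolding sless_def by (meson order.strict_trans)
  qed simp
qed

lemma Dset_above_in_coordinate:
  fixes c :: "'i::finite \<Rightarrow> nat"
  assumes "\<forall>x\<in>R. \<not> c \<le> x" and "x \<in> R" and "x \<notin> Dset S R"
  shows "\<exists>z\<in>Dset S R. x \<le> z \<and> x k < z k"
proof -
  have "\<exists>y\<in>maxset R. x \<le> y \<and> x k < y k"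
  proof (cases "x \<in> maxset R")
    case True
    then have "complete_infimum S (maxset R) x" using assms(3) unfolding Dset_def by blast
    then show ?thesis using complete_infimum_exceeds by blast
  next
    case False
    then obtain y where "y \<in> maxset R" "x \<lless> y" using maxset_dominates[OF assms(1,2)] by blast
    then show ?thesis unfolding sless_def le_fun_def by (auto intro: less_imp_le)
  qed
  then obtain y where y: "y \<in> maxset R" "x \<le> y" "x k < y k" by blast
  then obtain z where z: "z \<in> Dset S R" "y \<le> z" using Dset_above_maxset by blast
  have "x \<le> z" using y(2) z(2) by (rule order.trans)
  moreover have "x k < z k" using y(3) z(2) unfolding le_fun_def by (meson less_le_trans)
  ultimately show ?thesis using z(1) by blast
qed

lemma rem_subset: "rem S A n \<subseteq> A"
  by (induction n) auto

lemma level_eq_Dset_rem: "level S A i = Dset S (rem S A (nlevels S A - i))"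
  unfolding level_def Dlevel_def by simp

theorem lemma3p5:
  fixes S E :: "('i::finite \<Rightarrow> nat) set" and a :: "'i \<Rightarrow> nat" and i :: nat and k :: 'i
  assumes "good_semigroup S"
    and "good_ideal S E"
    and "E \<subset> S"
    and "1 \<le> i" and "i < nlevels S (S - E)"
    and "a \<in> level S (S - E) i"
  shows "\<exists>b \<in> level S (S - E) (i + 1). a \<le> b \<and> b k > a k"
proof -
  define R where "R = rem S (S - E) (nlevels S (S - E) - (i + 1))"
  have next_level: "level S (S - E) (i + 1) = Dset S R"
    unfolding R_def level_eq_Dset_rem ..
  have "nlevels S (S - E) - i = Suc (nlevels S (S - E) - (i + 1))"
    using assms(5) by simp
  then have "level S (S - E) i = Dset S (R - Dset S R)"
    unfolding R_def level_eq_Dset_rem by simp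
  then have "a \<in> R" "a \<notin> Dset S R"
    using assms(6) unfolding Dset_def maxset_def by auto
  obtain c where "\<forall>v. c \<le> v \<longrightarrow> v \<in> E"
    using assms(2) unfolding good_ideal_def G3_def by blast
  then have "\<forall>x\<in>R. \<not> c \<le> x" using rem_subset unfolding R_def by blast
  with \<open>a \<in> R\<close> \<open>a \<notin> Dset S R\<close> show ?thesis
    unfolding next_level by (blast dest: Dset_above_in_coordinate)
qed

end
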